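(* For positive integers $m,n$: $\chi_{ei}(F_{m,n})=1$ if $m=1$ and $n=2$; $\chi_{ei}(F_{m,n})=m+1$ if $m\ge 2$ and $n=2$; and $\chi_{ei}(F_{m,n})=m+n$ if either $m=1$ and $n\ge 4$, or $m\ge 2$ and $n\ge 3$.
   Context: All graphs are finite and simple. The fan graph $F_{m,n}$ is the join $\overline{K}_m\vee P_n$ of the edgeless graph on $m$ vertices and the path on $n$ vertices, i.e. the disjoint union of these two graphs together with all edges between them. A path $P_4$ in $G$ is a sequence $uxyv$ of four distinct vertices with $ux,xy,yv\in E(G)$; $u,v$ are its end vertices. An $e$-injective $k$-coloring of $G$ is a function $f:V(G)\to\{1,\dots,k\}$ with $f(u)\ne f(v)$ whenever $u,v$ are the end vertices of some path $P_4$ in $G$; $\chi_{ei}(G)$ is the least such $k$. *)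

theory Defs
  imports Main
begin

text \<open>A finite simple graph is given by a vertex set V and a symmetric irreflexive
adjacency relation E (only its restriction to V matters).\<close>

definition is_P4 :: "'a set \<Rightarrow> ('a \<Rightarrow> 'a \<Rightarrow> bool) \<Rightarrow> 'a \<Rightarrow> 'a \<Rightarrow> 'a \<Rightarrow> 'a \<Rightarrow> bool" where
  "is_P4 V E u x y v \<longleftrightarrow> u \<in> V \<and> x \<in> V \<and> y \<in> V \<and> v \<in> V \<and>
     distinct [u, x, y, v] \<and> E u x \<and> E x y \<and> E y v"

definition e_injective_coloring ::
  "'a set \<Rightarrow> ('a \<Rightarrow> 'a \<Rightarrow> bool) \<Rightarrow> nat \<Rightarrow> ('a \<Rightarrow> nat) \<Rightarrow> bool" where
  "e_injective_coloring V E k f \<longleftrightarrow>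
     (\<forall>v\<in>V. f v \<in> {1..k}) \<and>
     (\<forall>u x y v. is_P4 V E u x y v \<longrightarrow> f u \<noteq> f v)"

definition chi_ei :: "'a set \<Rightarrow> ('a \<Rightarrow> 'a \<Rightarrow> bool) \<Rightarrow> nat" where
  "chi_ei V E = (LEAST k. \<exists>f. e_injective_coloring V E k f)"

text \<open>Fan graph F_{m,n} = complement of K_m joined with P_n.
  Vertices Inl i (i < m) form the edgeless part, Inr j (j < n) the path
  Inr 0 - Inr 1 - ... - Inr (n-1).\<close>

definition fan_V :: "nat \<Rightarrow> nat \<Rightarrow> (nat + nat) set" where
  "fan_V m n = Inl ` {..<m} \<union> Inr ` {..<n}"

fun fan_E :: "nat + nat \<Rightarrow> nat + nat \<Rightarrow> bool" where
  "fan_E (Inl i) (Inl j) = False"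
| "fan_E (Inl i) (Inr j) = True"
| "fan_E (Inr j) (Inl i) = True"
| "fan_E (Inr i) (Inr j) = (i + 1 = j \<or> j + 1 = i)"

end

theory Submission
  imports Defs
begin

text \<open>Any two vertices that are the end vertices of some \<open>P\<^sub>4\<close> need distinct colours, so a
  set \<open>S\<close> of vertices that are pairwise ends of \<open>P\<^sub>4\<close>s forces \<open>card S\<close> colours; whenever a
  colouring with \<open>card S\<close> colours exists, this pins down \<open>\<chi>\<^sub>e\<^sub>i\<close>. For \<open>F\<^sub>m\<^sub>,\<^sub>n\<close> with
  \<open>n \<ge> 3\<close> (\<open>n \<ge> 4\<close> if \<open>m = 1\<close>) the whole vertex set is such a set; for \<open>n = 2\<close> and \<open>m \<ge> 2\<close>
  the two path vertices may share a colour, while the \<open>m\<close> independent vertices together with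
  one path vertex are pairwise ends of \<open>P\<^sub>4\<close>s; and \<open>F\<^sub>1\<^sub>,\<^sub>2\<close> is a triangle, which
  contains no \<open>P\<^sub>4\<close> at all.\<close>

definition P4_ends :: "'a set \<Rightarrow> ('a \<Rightarrow> 'a \<Rightarrow> bool) \<Rightarrow> 'a \<Rightarrow> 'a \<Rightarrow> bool" where
  "P4_ends V E a b \<longleftrightarrow> (\<exists>x y. is_P4 V E a x y b \<or> is_P4 V E b x y a)"

lemma P4_ends_sym: "P4_ends V E a b \<Longrightarrow> P4_ends V E b a"
  unfolding P4_ends_def by blast

lemma P4_endsI: "is_P4 V E a x y b \<Longrightarrow> P4_ends V E a b"
  unfolding P4_ends_def by blast

lemma e_injective_coloring_P4_ends:
  assumes "e_injective_coloring V E k f" "P4_ends V E a b"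
  shows "f a \<noteq> f b"
proof -
  obtain x y where "is_P4 V E a x y b \<or> is_P4 V E b x y a"
    using assms(2) unfolding P4_ends_def by blast
  with assms(1) show ?thesis
    unfolding e_injective_coloring_def by metis
qed

lemma card_le_if_pairwise_P4_ends:
  assumes "finite S" "S \<subseteq> V" "pairwise (P4_ends V E) S"
    and f: "e_injective_coloring V E k f"
  shows "card S \<le> k"
proof -
  have "inj_on f S"
  proof (rule inj_onI, rule ccontr)
    fix a b assume "a \<in> S" "b \<in> S" "f a = f b" "a \<noteq> b"
    then show False
      using assms(3) e_injective_coloring_P4_ends[OF f] unfolding pairwise_def by blast
  qed
  then have "card S = card (f ` S)"
    by (simp add: card_image)
  also have "\<dots> \<le> card {1..k}"
    using assms(2) f unfolding e_injective_coloring_def by (intro card_mono) auto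
  finally show ?thesis
    by simp
qed

lemma chi_ei_eqI:
  assumes "finite S" "S \<subseteq> V" "pairwise (P4_ends V E) S" "card S = k"
    and "e_injective_coloring V E k f"
  shows "chi_ei V E = k"
  unfolding chi_ei_def
  using assms card_le_if_pairwise_P4_ends[OF assms(1-3)] by (intro Least_equality) auto

lemma not_is_P4_if_card_less_4:
  assumes "finite V" "card V < 4"
  shows "\<not> is_P4 V E u x y v"
proof
  assume P4: "is_P4 V E u x y v"
  then have "card {u, x, y, v} \<le> card V"
    unfolding is_P4_def by (intro card_mono[OF assms(1)]) simp
  moreover have "card {u, x, y, v} = 4"
    using P4 unfolding is_P4_def by simp
  ultimately show False
    using assms(2) by simp
qed

lemma finite_fan_V: "finite (fan_V m n)"
  unfolding fan_V_def by simp

lemma card_fan_V: "card (fan_V m n) = m + n"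
  unfolding fan_V_def by (subst card_Un_disjoint) (auto simp: card_image)

lemma fan_P4_ends_Inl_Inl:
  assumes "n \<ge> 2" "i < m" "j < m" "i \<noteq> j"
  shows "P4_ends (fan_V m n) fan_E (Inl i) (Inl j)"
  using assms by (intro P4_endsI[of _ _ _ "Inr 0" "Inr 1"]) (auto simp: is_P4_def fan_V_def)

lemma ex_less_neq:
  fixes n :: nat
  assumes "n \<ge> 2"
  shows "\<exists>j < n. j \<noteq> i"
  using assms by (intro exI[of _ "if i = 0 then 1 else 0"]) auto

lemma fan_P4_ends_Inl_Inr:
  assumes "m \<ge> 2" "n \<ge> 2" "i < m" "j < n"
  shows "P4_ends (fan_V m n) fan_E (Inl i) (Inr j)"
proof -
  obtain i' where "i' < m" "i' \<noteq> i"
    using ex_less_neq[OF assms(1)] by blast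
  moreover obtain j' where "j' < n" "j' \<noteq> j"
    using ex_less_neq[OF assms(2)] by blast
  ultimately show ?thesis
    using assms by (intro P4_endsI[of _ _ _ "Inr j'" "Inl i'"]) (auto simp: is_P4_def fan_V_def)
qed

text \<open>For \<open>m = 1\<close> there is no second independent vertex to pass through, so the \<open>P\<^sub>4\<close>
  has to run two steps along the path.\<close>

lemma fan_P4_ends_Inl_Inr_long_path:
  assumes "n \<ge> 4" "i < m" "j < n"
  shows "P4_ends (fan_V m n) fan_E (Inl i) (Inr j)"
proof (cases "j \<ge> 2")
  case True
  then show ?thesis
    using assms by (intro P4_endsI[of _ _ _ "Inr (j - 2)" "Inr (j - 1)"])
          (auto simp: is_P4_def fan_V_def)
next
  case False
  then show ?thesis
    using assms by (intro P4_endsI[of _ _ _ "Inr (j + 2)" "Inr (j + 1)"])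
          (auto simp: is_P4_def fan_V_def)
qed

lemma fan_P4_ends_Inr_Inr:
  assumes "m \<ge> 1" "n \<ge> 3" "i < n" "j < n" "i \<noteq> j"
  shows "P4_ends (fan_V m n) fan_E (Inr i) (Inr j)"
proof -
  have "P4_ends (fan_V m n) fan_E (Inr i) (Inr j)" if "i < j" "j < n" for i j
  proof -
    consider "i + 1 < j" | "j = i + 1" "i \<ge> 1" | "i = 0" "j = 1"
      using \<open>i < j\<close> by linarith
    then show ?thesis
    proof cases
      case 1
      then show ?thesis
        using assms(1) that by (intro P4_endsI[of _ _ _ "Inr (i + 1)" "Inl 0"])
          (auto simp: is_P4_def fan_V_def)
    next
      case 2
      then show ?thesis
        using assms(1) that by (intro P4_endsI[of _ _ _ "Inr (i - 1)" "Inl 0"])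
          (auto simp: is_P4_def fan_V_def)
    next
      case 3
      then show ?thesis
        using assms(1,2) by (intro P4_endsI[of _ _ _ "Inl 0" "Inr 2"]) (auto simp: is_P4_def fan_V_def)
    qed
  qed
  then show ?thesis
    using assms(3-5) P4_ends_sym by (metis nat_neq_iff)
qed

lemma fan_pairwise_P4_ends:
  assumes "(m = 1 \<and> n \<ge> 4) \<or> (m \<ge> 2 \<and> n \<ge> 3)"
  shows "pairwise (P4_ends (fan_V m n) fan_E) (fan_V m n)"
proof -
  have Inl_Inr: "P4_ends (fan_V m n) fan_E (Inl i) (Inr j)" if "i < m" "j < n" for i j
    using assms that fan_P4_ends_Inl_Inr fan_P4_ends_Inl_Inr_long_path by fastforce
  have "P4_ends (fan_V m n) fan_E a b" if "a \<in> fan_V m n" "b \<in> fan_V m n" "a \<noteq> b" for a b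
  proof (cases a; cases b)
    fix i j assume "a = Inl i" "b = Inl j"
    then show ?thesis
      using assms that fan_P4_ends_Inl_Inl[of n i m j] by (auto simp: fan_V_def)
  next
    fix i j assume "a = Inl i" "b = Inr j"
    then show ?thesis
      using that Inl_Inr by (auto simp: fan_V_def)
  next
    fix i j assume "a = Inr i" "b = Inl j"
    then show ?thesis
      using that Inl_Inr[of j i] by (auto simp: fan_V_def intro: P4_ends_sym)
  next
    fix i j assume "a = Inr i" "b = Inr j"
    then show ?thesis
      using assms that fan_P4_ends_Inr_Inr[of m n i j] by (auto simp: fan_V_def)
  qed
  then show ?thesis
    unfolding pairwise_def by blast
qed

lemma fan_e_injective_coloring:
  "e_injective_coloring (fan_V m n) fan_E (m + n) (case_sum (\<lambda>i. i + 1) (\<lambda>j. m + j + 1))"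
  unfolding e_injective_coloring_def is_P4_def fan_V_def by (auto split: sum.splits)

text \<open>In \<open>F\<^sub>m\<^sub>,\<^sub>2\<close> every \<open>P\<^sub>4\<close> has an independent vertex as an end, so the two path
  vertices may share a colour.\<close>

lemma fan2_e_injective_coloring:
  "e_injective_coloring (fan_V m 2) fan_E (m + 1) (case_sum (\<lambda>i. i + 1) (\<lambda>_. m + 1))"
  unfolding e_injective_coloring_def is_P4_def fan_V_def by (auto split: sum.splits)

lemma fan2_pairwise_P4_ends:
  assumes "m \<ge> 2"
  shows "pairwise (P4_ends (fan_V m 2) fan_E) (insert (Inr 0) (Inl ` {..<m}))"
proof -
  have Inl_Inr: "P4_ends (fan_V m 2) fan_E (Inl i) (Inr 0) \<and> P4_ends (fan_V m 2) fan_E (Inr 0) (Inl i)"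
    if "i < m" for i
    using fan_P4_ends_Inl_Inr[OF assms order_refl that, of 0] P4_ends_sym by simp
  have Inl_Inl: "pairwise (P4_ends (fan_V m 2) fan_E) (Inl ` {..<m})"
  proof (rule pairwiseI)
    fix a b :: "nat + nat"
    assume "a \<in> Inl ` {..<m}" "b \<in> Inl ` {..<m}" "a \<noteq> b"
    then show "P4_ends (fan_V m 2) fan_E a b"
      using fan_P4_ends_Inl_Inl[of 2 _ m] by auto
  qed
  show ?thesis
    unfolding pairwise_insert using Inl_Inl Inl_Inr by auto
qed

theorem proposition3p8:
  fixes m n :: nat
  assumes "m \<ge> 1" and "n \<ge> 1"
  shows "(m = 1 \<and> n = 2 \<longrightarrow> chi_ei (fan_V m n) fan_E = 1)
       \<and> (m \<ge> 2 \<and> n = 2 \<longrightarrow> chi_ei (fan_V m n) fan_E = m + 1)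
       \<and> ((m = 1 \<and> n \<ge> 4) \<or> (m \<ge> 2 \<and> n \<ge> 3) \<longrightarrow> chi_ei (fan_V m n) fan_E = m + n)"
proof (intro conjI impI)
  assume mn: "m = 1 \<and> n = 2"
  then have "\<not> is_P4 (fan_V m n) fan_E u x y v" for u x y v
    by (intro not_is_P4_if_card_less_4) (simp_all add: finite_fan_V card_fan_V)
  then have "e_injective_coloring (fan_V m n) fan_E 1 (\<lambda>_. 1)"
    by (simp add: e_injective_coloring_def)
  then show "chi_ei (fan_V m n) fan_E = 1"
    using mn by (intro chi_ei_eqI[of "{Inl 0}"]) (auto simp: fan_V_def)
next
  assume mn: "m \<ge> 2 \<and> n = 2"
  have "card (insert (Inr 0) (Inl ` {..<m}) :: (nat + nat) set) = m + 1"
    by (subst card_insert_disjoint) (auto simp: card_image)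
  then show "chi_ei (fan_V m n) fan_E = m + 1"
    using mn fan2_pairwise_P4_ends fan2_e_injective_coloring
    by (intro chi_ei_eqI[of "insert (Inr 0) (Inl ` {..<m})"]) (auto simp: fan_V_def)
next
  assume "(m = 1 \<and> n \<ge> 4) \<or> (m \<ge> 2 \<and> n \<ge> 3)"
  then show "chi_ei (fan_V m n) fan_E = m + n"
    using fan_pairwise_P4_ends fan_e_injective_coloring
    by (intro chi_ei_eqI[of "fan_V m n"]) (simp_all add: finite_fan_V card_fan_V)
qed

end
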